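(* Let $\alpha,\beta,\gamma,\varepsilon>0$, $0<\mu<1$, $\eta>1$, $\eta_D>1$, and consider the system of ODEs for $x=(V,S,D)$: \[ \dot V=\alpha(1-\mu)V\,\Omega(x)-\varepsilon V,\qquad \dot S=\beta VS\,\theta(x)-\varepsilon S,\qquad \dot D=(\alpha\mu+\gamma D)V\,\theta(x)-\varepsilon D, \] where $\Omega(x)=1-V-\eta S-\eta_D D$ and $\theta(x)=1-V-S-D$. Set $\sigma=1-\frac{\varepsilon}{\alpha(1-\mu)}$ and assume $\mu<1-\frac{\varepsilon}{\alpha}$ (equivalently $\sigma>0$). Let $\mathcal U=\{(V,S,D): V,S,D\ge0,\ V+S+D\le1\}$. Then a point $Q=(V_2,S_2,D_2)$ with $V_2,S_2,D_2>0$ is an equilibrium point of the system if and only if $Q\in\mathcal U$ and the following hold: (i) $D_2=\dfrac{\alpha\mu}{\beta-\gamma}$, which necessarily requires $\beta>\gamma$; moreover necessarily $D_2<\sigma/\eta_D$; (ii) $0<V_2<\sigma$ is a root of $V^2+MV+m=0$, where \[ M=\frac{\sigma-(\eta_D-\eta)D_2-\eta}{\eta-1},\qquad m=\frac{\eta\varepsilon}{\beta(\eta-1)}>0, \] i.e. $V_2=V_2^{\pm}=\frac{-M\pm\sqrt{M^2-4m}}{2}$, provided $M^2-4m\ge0$; (iii) $0<S_2<1$ is given by $S_2=1-V_2-D_2-\dfrac{\varepsilon}{\beta V_2}$.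
   Context: $V$, $S$, $D$ are the normalised concentrations of a helper virus, a satellite RNA, and defective interfering RNAs respectively; a point $Q$ with all three components positive is called a coexistence equilibrium. An equilibrium point is a zero of the right-hand side of the system. *)

theory Defs
  imports Complex_Main
begin

definition Omega :: "real \<Rightarrow> real \<Rightarrow> real \<times> real \<times> real \<Rightarrow> real" where
  "Omega eta etaD x = (case x of (V, S, D) \<Rightarrow> 1 - V - eta * S - etaD * D)"

definition theta :: "real \<times> real \<times> real \<Rightarrow> real" where
  "theta x = (case x of (V, S, D) \<Rightarrow> 1 - V - S - D)"

definition vfield ::
  "real \<Rightarrow> real \<Rightarrow> real \<Rightarrow> real \<Rightarrow> real \<Rightarrow> real \<Rightarrow> real \<Rightarrow>
   real \<times> real \<times> real \<Rightarrow> real \<times> real \<times> real" where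
  "vfield alpha beta gamma eps mu eta etaD x = (case x of (V, S, D) \<Rightarrow>
     (alpha * (1 - mu) * V * Omega eta etaD x - eps * V,
      beta * V * S * theta x - eps * S,
      (alpha * mu + gamma * D) * V * theta x - eps * D))"

definition is_equilibrium ::
  "real \<Rightarrow> real \<Rightarrow> real \<Rightarrow> real \<Rightarrow> real \<Rightarrow> real \<Rightarrow> real \<Rightarrow> real \<times> real \<times> real \<Rightarrow> bool" where
  "is_equilibrium alpha beta gamma eps mu eta etaD x \<longleftrightarrow>
     vfield alpha beta gamma eps mu eta etaD x = (0, 0, 0)"

definition U_set :: "(real \<times> real \<times> real) set" where
  "U_set = {(V, S, D). V \<ge> 0 \<and> S \<ge> 0 \<and> D \<ge> 0 \<and> V + S + D \<le> 1}"

definition sigma :: "real \<Rightarrow> real \<Rightarrow> real \<Rightarrow> real" where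
  "sigma alpha eps mu = 1 - eps / (alpha * (1 - mu))"

definition coefM :: "real \<Rightarrow> real \<Rightarrow> real \<Rightarrow> real \<Rightarrow> real \<Rightarrow> real \<Rightarrow> real" where
  "coefM alpha eps mu eta etaD D2 = (sigma alpha eps mu - (etaD - eta) * D2 - eta) / (eta - 1)"

definition coefm :: "real \<Rightarrow> real \<Rightarrow> real \<Rightarrow> real" where
  "coefm beta eps eta = eta * eps / (beta * (eta - 1))"

end

theory Submission
  imports Defs "HOL-Library.Quadratic_Discriminant"
begin

text \<open>With V, S, D nonzero, each component of the vector field can be divided by its own
  variable: the V-equation becomes the line V + eta S + etaD D = sigma and the S-equation says
  beta V theta = eps. Substituting the latter into the D-equation pins down D on its own, and
  substituting S from the S-equation into the line gives a quadratic for V. The bounds then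
  follow from positivity alone.\<close>

lemma monic_quadratic_eq_0_iff:
  fixes x b c :: real
  shows "x\<^sup>2 + b * x + c = 0 \<longleftrightarrow>
    b\<^sup>2 - 4 * c \<ge> 0 \<and> (x = (- b + sqrt (b\<^sup>2 - 4 * c)) / 2 \<or> x = (- b - sqrt (b\<^sup>2 - 4 * c)) / 2)"
  using discriminant_iff[of 1 x b c] by (simp add: discrim_def)

lemma V_component_eq_0_iff:
  fixes alpha eps mu eta etaD V S D :: real
  assumes "V \<noteq> 0" "alpha * (1 - mu) \<noteq> 0"
  shows "alpha * (1 - mu) * V * Omega eta etaD (V, S, D) - eps * V = 0 \<longleftrightarrow>
    V + eta * S + etaD * D = sigma alpha eps mu"
proof -
  let ?a = "alpha * (1 - mu)"
  have "?a * V * Omega eta etaD (V, S, D) - eps * V = V * (?a * Omega eta etaD (V, S, D) - eps)"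
    by (simp add: algebra_simps)
  also have "\<dots> = 0 \<longleftrightarrow> Omega eta etaD (V, S, D) = eps / ?a"
    using assms by (auto simp: eq_divide_eq mult.commute[of ?a])
  also have "\<dots> \<longleftrightarrow> V + eta * S + etaD * D = sigma alpha eps mu"
    by (auto simp: Omega_def sigma_def)
  finally show ?thesis .
qed

lemma S_component_eq_0_iff:
  fixes beta eps V S D :: real
  assumes "S \<noteq> 0" "beta * V \<noteq> 0"
  shows "beta * V * S * theta (V, S, D) - eps * S = 0 \<longleftrightarrow> S = 1 - V - D - eps / (beta * V)"
proof -
  have "beta * V * S * theta (V, S, D) - eps * S = S * (beta * V * theta (V, S, D) - eps)"
    by (simp add: algebra_simps)
  also have "\<dots> = 0 \<longleftrightarrow> theta (V, S, D) = eps / (beta * V)"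
    using assms by (auto simp: eq_divide_eq mult.commute[of "beta * V"])
  also have "\<dots> \<longleftrightarrow> S = 1 - V - D - eps / (beta * V)"
    by (auto simp: theta_def)
  finally show ?thesis .
qed

lemma D_component_eq_0_iff:
  fixes alpha beta gamma eps mu V D :: real and x :: "real \<times> real \<times> real"
  assumes "beta * V * theta x = eps" "beta \<noteq> 0" "eps \<noteq> 0" "alpha * mu > 0" "D > 0"
  shows "(alpha * mu + gamma * D) * V * theta x - eps * D = 0 \<longleftrightarrow>
    D = alpha * mu / (beta - gamma) \<and> gamma < beta"
proof -
  have "beta * ((alpha * mu + gamma * D) * V * theta x - eps * D) =
      (alpha * mu + gamma * D) * (beta * V * theta x) - beta * eps * D"
    by (simp add: algebra_simps)
  also have "\<dots> = eps * (alpha * mu - (beta - gamma) * D)"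
    using assms(1) by (simp add: algebra_simps)
  finally have "(alpha * mu + gamma * D) * V * theta x - eps * D = 0 \<longleftrightarrow>
      alpha * mu = (beta - gamma) * D"
    using assms(2,3) by (metis eq_iff_diff_eq_0 mult_eq_0_iff)
  also have "\<dots> \<longleftrightarrow> D = alpha * mu / (beta - gamma) \<and> gamma < beta"
  proof
    assume D_eq: "alpha * mu = (beta - gamma) * D"
    then have "gamma < beta"
      using assms(4,5) by (simp add: zero_less_mult_iff)
    with D_eq show "D = alpha * mu / (beta - gamma) \<and> gamma < beta"
      by (simp add: eq_divide_eq)
  qed (auto simp: eq_divide_eq mult.commute)
  finally show ?thesis .
qed

lemma sigma_line_iff_quadratic:
  fixes alpha beta eps mu eta etaD V S D :: real
  assumes "S = 1 - V - D - eps / (beta * V)" "V \<noteq> 0" "beta \<noteq> 0" "eta \<noteq> 1"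
  shows "V + eta * S + etaD * D = sigma alpha eps mu \<longleftrightarrow>
    V\<^sup>2 + coefM alpha eps mu eta etaD D * V + coefm beta eps eta = 0"
proof -
  have VS: "V * S = V - V\<^sup>2 - D * V - eps / beta"
    using assms(1-3) by (simp add: field_simps power2_eq_square)
  have M: "(1 - eta) * coefM alpha eps mu eta etaD D = eta - eta * D + etaD * D - sigma alpha eps mu"
    using assms(4) by (simp add: coefM_def field_simps)
  have m: "(1 - eta) * coefm beta eps eta = - (eta * eps / beta)"
    using assms(3,4) by (simp add: coefm_def field_simps)
  have "V * (V + eta * S + etaD * D - sigma alpha eps mu) =
      V\<^sup>2 + eta * (V * S) + etaD * D * V - sigma alpha eps mu * V"
    by (simp add: algebra_simps power2_eq_square)
  also have "\<dots> = (1 - eta) * V\<^sup>2 + ((1 - eta) * coefM alpha eps mu eta etaD D) * V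
      + (1 - eta) * coefm beta eps eta"
    unfolding VS M m by (simp add: algebra_simps)
  also have "\<dots> = (1 - eta) * (V\<^sup>2 + coefM alpha eps mu eta etaD D * V + coefm beta eps eta)"
    by (simp add: algebra_simps)
  finally have "V * (V + eta * S + etaD * D - sigma alpha eps mu) =
      (1 - eta) * (V\<^sup>2 + coefM alpha eps mu eta etaD D * V + coefm beta eps eta)" .
  then show ?thesis
    using assms(2,4) by (metis eq_iff_diff_eq_0 mult_eq_0_iff right_minus_eq)
qed

lemma positive_equilibrium_iff:
  fixes alpha beta gamma eps mu eta etaD V S D :: real
  assumes "alpha * (1 - mu) \<noteq> 0" "alpha * mu > 0" "beta \<noteq> 0" "eps \<noteq> 0"
    and "V \<noteq> 0" "S \<noteq> 0" "D > 0"
  shows "is_equilibrium alpha beta gamma eps mu eta etaD (V, S, D) \<longleftrightarrow>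
    V + eta * S + etaD * D = sigma alpha eps mu \<and> S = 1 - V - D - eps / (beta * V) \<and>
    D = alpha * mu / (beta - gamma) \<and> gamma < beta"
proof -
  have "beta * V * theta (V, S, D) = eps" if "S = 1 - V - D - eps / (beta * V)"
    using that assms(3,5) by (simp add: theta_def)
  then show ?thesis
    using V_component_eq_0_iff[OF assms(5,1)] S_component_eq_0_iff[OF assms(6)]
      D_component_eq_0_iff[OF _ assms(3,4,2,7)] assms(3,5)
    unfolding is_equilibrium_def vfield_def by auto
qed

lemma sigma_line_bounds:
  fixes eta etaD V S D s :: real
  assumes "V + eta * S + etaD * D = s" "V > 0" "S > 0" "D > 0" "eta > 0" "etaD > 0"
  shows "V < s" "D < s / etaD"
proof -
  have "eta * S > 0" "etaD * D > 0"
    using assms by simp_all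
  then show "V < s"
    using assms(1) by linarith
  have "etaD * D < s"
    using \<open>eta * S > 0\<close> assms(1,2) by linarith
  then show "D < s / etaD"
    using assms(6) by (simp add: less_divide_eq mult.commute)
qed

lemma S_formula_in_U_set:
  fixes beta eps V S D :: real
  assumes "S = 1 - V - D - eps / (beta * V)" "V > 0" "S \<ge> 0" "D \<ge> 0" "beta > 0" "eps > 0"
  shows "(V, S, D) \<in> U_set" "S < 1"
proof -
  have "eps / (beta * V) > 0"
    using assms by simp
  then show "(V, S, D) \<in> U_set" "S < 1"
    using assms(1-4) unfolding U_set_def by auto
qed

theorem proposition2:
  fixes alpha beta gamma eps mu eta etaD V2 S2 D2 :: real
  assumes "alpha > 0" "beta > 0" "gamma > 0" "eps > 0"
    and "0 < mu" "mu < 1" "eta > 1" "etaD > 1"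
    and "mu < 1 - eps / alpha"
    and "V2 > 0" "S2 > 0" "D2 > 0"
  shows "is_equilibrium alpha beta gamma eps mu eta etaD (V2, S2, D2) \<longleftrightarrow>
    ((V2, S2, D2) \<in> U_set \<and>
     (D2 = alpha * mu / (beta - gamma) \<and> beta > gamma \<and> D2 < sigma alpha eps mu / etaD) \<and>
     (0 < V2 \<and> V2 < sigma alpha eps mu \<and>
      V2\<^sup>2 + coefM alpha eps mu eta etaD D2 * V2 + coefm beta eps eta = 0 \<and>
      coefm beta eps eta > 0 \<and>
      (coefM alpha eps mu eta etaD D2)\<^sup>2 - 4 * coefm beta eps eta \<ge> 0 \<and>
      (V2 = (- coefM alpha eps mu eta etaD D2
              + sqrt ((coefM alpha eps mu eta etaD D2)\<^sup>2 - 4 * coefm beta eps eta)) / 2 \<or>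
       V2 = (- coefM alpha eps mu eta etaD D2
              - sqrt ((coefM alpha eps mu eta etaD D2)\<^sup>2 - 4 * coefm beta eps eta)) / 2)) \<and>
     (0 < S2 \<and> S2 < 1 \<and> S2 = 1 - V2 - D2 - eps / (beta * V2)))"
proof -
  have "alpha * (1 - mu) \<noteq> 0" "alpha * mu > 0" "beta \<noteq> 0" "eps \<noteq> 0" "V2 \<noteq> 0" "S2 \<noteq> 0"
    using assms by simp_all
  note equilibrium_iff = positive_equilibrium_iff[OF this assms(12)]
  have "eta \<noteq> 1" "coefm beta eps eta > 0"
    using assms by (simp_all add: coefm_def)
  note line_iff_quadratic = sigma_line_iff_quadratic[OF _ \<open>V2 \<noteq> 0\<close> \<open>beta \<noteq> 0\<close> \<open>eta \<noteq> 1\<close>]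
  show ?thesis (is "?equilibrium \<longleftrightarrow> ?conditions")
  proof
    assume ?equilibrium
    then have line: "V2 + eta * S2 + etaD * D2 = sigma alpha eps mu"
      and S2_eq: "S2 = 1 - V2 - D2 - eps / (beta * V2)"
      and D2_eq: "D2 = alpha * mu / (beta - gamma) \<and> gamma < beta"
      unfolding equilibrium_iff by blast+
    have quadratic: "V2\<^sup>2 + coefM alpha eps mu eta etaD D2 * V2 + coefm beta eps eta = 0"
      using line line_iff_quadratic[OF S2_eq] by simp
    show ?conditions
      using sigma_line_bounds[OF line] S_formula_in_U_set[OF S2_eq] assms D2_eq S2_eq
        \<open>coefm beta eps eta > 0\<close> quadratic monic_quadratic_eq_0_iff[THEN iffD1, OF quadratic]
      by auto
  next
    assume ?conditions
    then have S2_eq: "S2 = 1 - V2 - D2 - eps / (beta * V2)"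
      and D2_eq: "D2 = alpha * mu / (beta - gamma) \<and> gamma < beta"
      and quadratic: "V2\<^sup>2 + coefM alpha eps mu eta etaD D2 * V2 + coefm beta eps eta = 0"
      by blast+
    then show ?equilibrium
      unfolding equilibrium_iff line_iff_quadratic[OF S2_eq] by blast
  qed
qed

end
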